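(* There exists $\epsilon>0$ such that, for all $\mu\in[-1,0.55]$, $d\theta(f_\mu)<-\epsilon$ on $K_\mu\setminus\Delta$.
   Context: The Sprott vector field $f_\mu$ on $\mathbb{R}^3$ is $\dot x=y^2-z-\mu x$, $\dot y=z^2-x-\mu y$, $\dot z=x^2-y-\mu z$. $\Delta:=\mathrm{span}\{(1,1,1)\}$; $\|\mathbf{x}_\perp\|^2=\tfrac23(x^2+y^2+z^2-xy-yz-zx)$; $d\theta:=\frac{1}{\sqrt3}\frac{(z-y)dx+(x-z)dy+(y-x)dz}{\|\mathbf{x}_\perp\|^2}$ on $\mathbb{R}^3\setminus\Delta$. $V(\mathbf{x}):=x+y+z$, $r_\mu:=\|\mathbf{x}-\frac{1+\mu}{2}(1,1,1)\|$, $c:=\frac{3^{3/4}+3^{1/4}}{2}$. For $\mu>-1$, $K_\mu:=\{\mathbf{x}\colon V(\mathbf{x})\ge r_\mu-c(1+\mu)\arctan(\frac{2r_\mu}{3^{1/4}(1+\mu)})-\frac{\sqrt3}{2}(1+\mu)+c(1+\mu)\arctan(3^{1/4})\}\cap V^{-1}[0,3(1+\mu)]$, and $K_{-1}:=\{\mathbf{0}\}$. *)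

theory Defs
  imports "HOL-Analysis.Analysis"
begin

text \<open>Points of R^3 are vectors p :: real^3 with coordinates x = p$1, y = p$2, z = p$3.\<close>

definition sprott :: "real \<Rightarrow> real^3 \<Rightarrow> real^3" where
  "sprott \<mu> p = vector [(p$2)^2 - p$3 - \<mu> * p$1,
                          (p$3)^2 - p$1 - \<mu> * p$2,
                          (p$1)^2 - p$2 - \<mu> * p$3]"

definition diag :: "(real^3) set" where
  "diag = span {vector [1, 1, 1]}"

definition perp_norm_sq :: "real^3 \<Rightarrow> real" where
  "perp_norm_sq p = 2/3 * ((p$1)^2 + (p$2)^2 + (p$3)^2 - p$1*p$2 - p$2*p$3 - p$3*p$1)"

definition dtheta :: "real^3 \<Rightarrow> real^3 \<Rightarrow> real" where
  "dtheta p v = 1 / sqrt 3 *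
     (((p$3 - p$2) * v$1 + (p$1 - p$3) * v$2 + (p$2 - p$1) * v$3) / perp_norm_sq p)"

definition Vfun :: "real^3 \<Rightarrow> real" where
  "Vfun p = p$1 + p$2 + p$3"

definition r_mu :: "real \<Rightarrow> real^3 \<Rightarrow> real" where
  "r_mu \<mu> p = norm (p - ((1 + \<mu>) / 2) *\<^sub>R vector [1, 1, 1])"

definition c_const :: real where
  "c_const = (3 powr (3/4) + 3 powr (1/4)) / 2"

definition K :: "real \<Rightarrow> (real^3) set" where
  "K \<mu> = (if \<mu> = -1 then {0} else
     {p. Vfun p \<ge> r_mu \<mu> p
            - c_const * (1 + \<mu>) * arctan (2 * r_mu \<mu> p / (3 powr (1/4) * (1 + \<mu>)))
            - sqrt 3 / 2 * (1 + \<mu>)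
            + c_const * (1 + \<mu>) * arctan (3 powr (1/4))}
     \<inter> {p. 0 \<le> Vfun p \<and> Vfun p \<le> 3 * (1 + \<mu>)})"

end

theory Submission
  imports Defs
begin

text \<open>The term \<open>-\<mu>p\<close> of the Sprott field is radial and is annihilated by \<open>d\<theta>\<close>, and the linear
  part contributes the constant \<open>-\<surd>3/2\<close>. Hence
  \<open>\<surd>3 d\<theta>(f\<^sub>\<mu>) = C/P - 3/2 - V\<close>, where \<open>P = \<parallel>x\<^sub>\<perp>\<parallel>\<^sup>2\<close> and the cubic term \<open>C\<close> depends only on
  \<open>x\<^sub>\<perp>\<close> and satisfies \<open>2C\<^sup>2 \<le> P\<^sup>3\<close>, so \<open>C/P \<le> \<surd>(P/2) \<le> r\<^sub>\<mu>/\<surd>2\<close>. On \<open>K\<^sub>\<mu>\<close> the estimate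
  \<open>arctan t - arctan a \<le> (t - a)/(1 + ta)\<close> turns the defining inequality into a quadratic
  constraint on \<open>r\<^sub>\<mu>\<close> giving \<open>r\<^sub>\<mu> < \<surd>2 (1.45 + V)\<close> for \<open>\<mu> \<le> 0.55\<close>, whence
  \<open>\<surd>3 d\<theta>(f\<^sub>\<mu>) \<le> -0.05\<close>.\<close>

lemma arctan_diff_le:
  fixes a t :: real
  assumes "0 \<le> a" "a \<le> t"
  shows "arctan t - arctan a \<le> (t - a) / (1 + t * a)"
proof -
  let ?f = "\<lambda>x. arctan x - arctan a - (x - a) / (1 + x * a)"
  have "?f t \<le> ?f a"
  proof (rule DERIV_nonpos_imp_nonincreasing[OF assms(2)])
    fix x assume x: "a \<le> x" "x \<le> t"
    have pos: "1 + x * a > 0" using x assms by (simp add: add_pos_nonneg)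
    have "DERIV ?f x :> inverse (1 + x\<^sup>2) - (1 + a\<^sup>2) / (1 + x * a)\<^sup>2"
      using pos by (auto intro!: derivative_eq_intros simp: power2_eq_square algebra_simps)
    moreover have "(1 + x * a)\<^sup>2 \<le> (1 + a\<^sup>2) * (1 + x\<^sup>2)"
      using sum_squares_ge_zero[of 0 "x - a"] by (simp add: algebra_simps power2_eq_square)
    then have "inverse (1 + x\<^sup>2) \<le> (1 + a\<^sup>2) / (1 + x * a)\<^sup>2"
      using pos by (simp add: field_simps inverse_eq_divide add_pos_nonneg)
    ultimately show "\<exists>y. DERIV ?f x :> y \<and> y \<le> 0" by force
  qed
  then show ?thesis by simp
qed

lemma perp_norm_sq_eq:
  "perp_norm_sq p = ((p$1 - p$2)\<^sup>2 + (p$2 - p$3)\<^sup>2 + (p$3 - p$1)\<^sup>2) / 3"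
  unfolding perp_norm_sq_def by (simp add: power2_eq_square algebra_simps)

lemma perp_norm_sq_pos:
  assumes "p \<notin> diag"
  shows "perp_norm_sq p > 0"
proof (rule ccontr)
  assume "\<not> perp_norm_sq p > 0"
  then have "(p$1 - p$2)\<^sup>2 + (p$2 - p$3)\<^sup>2 + (p$3 - p$1)\<^sup>2 \<le> 0"
    unfolding perp_norm_sq_eq by simp
  then have "p$2 = p$1" "p$3 = p$1"
    using zero_le_power2[of "p$1 - p$2"] zero_le_power2[of "p$2 - p$3"]
      zero_le_power2[of "p$3 - p$1"] by (smt (verit) power_eq_0_iff zero_less_power2)+
  then have "p = p$1 *\<^sub>R vector [1, 1, 1]"
    by (simp add: vec_eq_iff forall_3)
  then have "p \<in> diag"
    unfolding diag_def by (metis span_base span_mul singletonI)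
  with assms show False by contradiction
qed

text \<open>Pythagoras: \<open>r\<^sub>\<mu>\<^sup>2\<close> splits into the perpendicular part and the diagonal part \<open>3(V/3 - (1+\<mu>)/2)\<^sup>2\<close>.\<close>
lemma perp_norm_sq_le_r_mu: "perp_norm_sq p \<le> (r_mu \<mu> p)\<^sup>2"
proof -
  let ?m = "(1 + \<mu>) / 2"
  have "(r_mu \<mu> p)\<^sup>2 = (p$1 - ?m)\<^sup>2 + (p$2 - ?m)\<^sup>2 + (p$3 - ?m)\<^sup>2"
    unfolding r_mu_def norm_vec_def L2_set_def by (simp add: sum_3)
  also have "\<dots> = perp_norm_sq p + 3 * (Vfun p / 3 - ?m)\<^sup>2"
    unfolding perp_norm_sq_def Vfun_def by (simp add: power2_eq_square field_simps)
  finally show ?thesis by simp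
qed

definition cubic_part :: "real^3 \<Rightarrow> real" where
  "cubic_part p = (p$3 - p$2) * (p$2)\<^sup>2 + (p$1 - p$3) * (p$3)\<^sup>2 + (p$2 - p$1) * (p$1)\<^sup>2
                  + Vfun p * perp_norm_sq p"

lemma dtheta_sprott:
  assumes "perp_norm_sq p \<noteq> 0"
  shows "dtheta p (sprott \<mu> p) = (cubic_part p / perp_norm_sq p - 3/2 - Vfun p) / sqrt 3"
proof -
  have numerator: "(p$3 - p$2) * sprott \<mu> p $ 1 + (p$1 - p$3) * sprott \<mu> p $ 2 + (p$2 - p$1) * sprott \<mu> p $ 3
      = cubic_part p - 3/2 * perp_norm_sq p - Vfun p * perp_norm_sq p"
    unfolding sprott_def cubic_part_def perp_norm_sq_def Vfun_def by simp algebra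
  show ?thesis
    unfolding dtheta_def numerator using assms by (simp add: field_simps)
qed

text \<open>In the coordinates \<open>a, b, c\<close> of \<open>x\<^sub>\<perp>\<close> (so \<open>a + b + c = 0\<close>) the defect \<open>P\<^sup>3 - 2C\<^sup>2\<close> is a
  perfect square.\<close>
lemma cubic_part_sq_le: "2 * (cubic_part p)\<^sup>2 \<le> (perp_norm_sq p) ^ 3"
proof -
  define a where "a = p$1 - Vfun p / 3"
  define b where "b = p$2 - Vfun p / 3"
  define c where "c = p$3 - Vfun p / 3"
  have "(perp_norm_sq p) ^ 3 - 2 * (cubic_part p)\<^sup>2
      = 3/2 * (3 * a * b * c - (a - b) * (b - c) * (c - a))\<^sup>2"
    unfolding a_def b_def c_def cubic_part_def perp_norm_sq_def Vfun_def by algebra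
  moreover have "0 \<le> 3/2 * (3 * a * b * c - (a - b) * (b - c) * (c - a))\<^sup>2" by simp
  ultimately show ?thesis by linarith
qed

lemma cubic_part_div_le:
  assumes "perp_norm_sq p > 0"
  shows "cubic_part p / perp_norm_sq p \<le> sqrt (perp_norm_sq p / 2)"
proof (rule real_le_rsqrt)
  show "(cubic_part p / perp_norm_sq p)\<^sup>2 \<le> perp_norm_sq p / 2"
    using cubic_part_sq_le[of p] assms
    by (simp add: field_simps power2_eq_square power3_eq_cube)
qed

lemma sqrt3_le: "sqrt (3::real) \<le> 17321/10000"
  by (rule real_le_lsqrt) (auto simp: power2_eq_square)

lemma quarter_root_3_sq: "(3 powr (1/4) :: real)\<^sup>2 = sqrt 3"
  by (simp add: powr_power powr_half_sqrt[symmetric])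

lemma c_const_eq: "c_const = 3 powr (1/4) * (sqrt 3 + 1) / 2"
proof -
  have "(3::real) powr (3/4) = 3 powr (1/4) * 3 powr (1/2)"
    by (simp add: powr_add[symmetric])
  then show ?thesis
    unfolding c_const_def by (simp add: powr_half_sqrt algebra_simps)
qed

lemma K_quadratic_constraint:
  assumes "-1 < \<mu>" and "p \<in> K \<mu>" and "sqrt 3 * (1 + \<mu>) \<le> 2 * r_mu \<mu> p"
  shows "(2 * r_mu \<mu> p - sqrt 3 * (1 + \<mu>))\<^sup>2 \<le> 2 * Vfun p * (1 + \<mu> + 2 * r_mu \<mu> p)"
proof -
  define l where "l = 1 + \<mu>"
  define r where "r = r_mu \<mu> p"
  define k where "k = sqrt (3::real)"
  define a where "a = (3::real) powr (1/4)"
  define t where "t = 2 * r / (a * l)"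
  have l: "0 < l" using assms(1) unfolding l_def by simp
  have a: "0 < a" "a\<^sup>2 = k" unfolding a_def k_def using quarter_root_3_sq by simp_all
  have r: "0 \<le> r" unfolding r_def r_mu_def by simp
  have kk: "k\<^sup>2 = 3" unfolding k_def by simp
  have lr: "0 < l + 2 * r" using l r by simp
  have K: "r - c_const * l * (arctan t - arctan a) - k / 2 * l \<le> Vfun p"
    using assms(1,2) unfolding K_def l_def r_def k_def a_def t_def by (auto simp: algebra_simps)
  have "k * l \<le> 2 * r" using assms(3) unfolding k_def l_def r_def by simp
  then have "a \<le> t"
    using a l unfolding t_def by (simp add: pos_le_divide_eq power2_eq_square mult.assoc[symmetric])
  then have arctan_le: "arctan t - arctan a \<le> (t - a) / (1 + t * a)"
    using a by (intro arctan_diff_le) auto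
  have den: "1 + t * a = (l + 2 * r) / l" and num: "t - a = (2 * r - k * l) / (a * l)"
    unfolding t_def a(2)[symmetric] using a(1) l by (simp_all add: field_simps power2_eq_square)
  have quotient: "(t - a) / (1 + t * a) = (2 * r - k * l) / (a * (l + 2 * r))"
    unfolding den num using l by simp
  have "0 \<le> c_const * l"
    unfolding c_const_eq using a l by simp
  with arctan_le have "c_const * l * (arctan t - arctan a) \<le> c_const * l * ((t - a) / (1 + t * a))"
    by (rule mult_left_mono)
  also have "\<dots> = (k + 1) / 2 * l * (2 * r - k * l) / (l + 2 * r)"
    unfolding quotient c_const_eq a_def[symmetric] k_def[symmetric] using a(1) by simp
  finally have "r - k / 2 * l - (k + 1) / 2 * l * (2 * r - k * l) / (l + 2 * r) \<le> Vfun p"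
    using K by linarith
  also have "r - k / 2 * l - (k + 1) / 2 * l * (2 * r - k * l) / (l + 2 * r)
      = (2 * r - k * l)\<^sup>2 / (2 * (l + 2 * r))"
    using l lr kk by (simp add: field_simps power2_eq_square)
  finally show ?thesis
    using lr unfolding l_def[symmetric] r_def[symmetric] k_def[symmetric]
    by (simp add: field_simps)
qed

lemma quadratic_constraint_bound:
  fixes k l V s :: real
  assumes k: "0 \<le> k" "k \<le> 17321/10000" and l: "0 < l" "l \<le> 155/100" and V: "0 \<le> V"
    and constraint: "(s - k * l)\<^sup>2 \<le> 2 * V * (l + s)"
  shows "s \<le> 2828/1000 * (145/100 + V)"
proof (rule ccontr)
  define u where "u = 41006/10000 + 2828/1000 * V"
  let ?Q = "\<lambda>s. (s - k * l)\<^sup>2 - 2 * V * (l + s)"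
  assume "\<not> s \<le> 2828/1000 * (145/100 + V)"
  then have su: "u < s" unfolding u_def by simp
  have kl: "0 \<le> k * l" "k * l \<le> 26848/10000"
    using k l mult_mono[OF k(2) l(2)] by simp_all
  have "0 < ?Q u"
  proof -
    have "14158/10000 + 2828/1000 * V \<le> u - k * l" unfolding u_def using kl by linarith
    then have "(14158/10000 + 2828/1000 * V)\<^sup>2 \<le> (u - k * l)\<^sup>2"
      using V by (intro power_mono) simp_all
    moreover have "2 * V * (l + u) \<le> 2 * V * (155/100 + u)" using V l by (simp add: mult_left_mono)
    moreover have "(14158/10000 + 2828/1000 * V)\<^sup>2 - 2 * V * (155/100 + u)
        = 23/10 * (V - 2058397/2875000)\<^sup>2 + 2599/62500 * V\<^sup>2 + 2966636434141/3593750000000"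
      unfolding u_def by algebra
    moreover have "0 \<le> 23/10 * (V - 2058397/2875000)\<^sup>2 + 2599/62500 * V\<^sup>2" by simp
    ultimately show ?thesis by linarith
  qed
  also have "?Q u \<le> ?Q s"
  proof -
    have "?Q s - ?Q u = (s - u) * (s + u - 2 * (k * l) - 2 * V)"
      by (simp add: power2_eq_square algebra_simps)
    moreover have "0 \<le> (s - u) * (s + u - 2 * (k * l) - 2 * V)"
      using su kl V unfolding u_def by (intro mult_nonneg_nonneg) linarith+
    ultimately show ?thesis by linarith
  qed
  finally show False using constraint by simp
qed

lemma K_Vfun_nonneg: "p \<in> K \<mu> \<Longrightarrow> 0 \<le> Vfun p"
  by (auto simp: K_def Vfun_def split: if_splits)

lemma K_r_mu_le:
  assumes "-1 < \<mu>" "\<mu> \<le> 55/100" and "p \<in> K \<mu>"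
  shows "r_mu \<mu> p \<le> 1414/1000 * (145/100 + Vfun p)"
proof (cases "2 * r_mu \<mu> p \<le> sqrt 3 * (1 + \<mu>)")
  case True
  have "sqrt 3 * (1 + \<mu>) \<le> 17321/10000 * (155/100)"
    using assms(1,2) sqrt3_le by (intro mult_mono) auto
  with True K_Vfun_nonneg[OF assms(3)] show ?thesis by simp
next
  case False
  have "2 * r_mu \<mu> p \<le> 2828/1000 * (145/100 + Vfun p)"
    using K_quadratic_constraint[OF assms(1,3)] False assms(1,2) sqrt3_le K_Vfun_nonneg[OF assms(3)]
    by (intro quadratic_constraint_bound[where k = "sqrt 3" and l = "1 + \<mu>"]) (auto simp: algebra_simps)
  then show ?thesis by simp
qed

lemma dtheta_sprott_le_on_K:
  assumes "-1 < \<mu>" "\<mu> \<le> 55/100" and "p \<in> K \<mu>" "p \<notin> diag"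
  shows "dtheta p (sprott \<mu> p) \<le> - (5/100) / sqrt 3"
proof -
  let ?P = "perp_norm_sq p" and ?r = "r_mu \<mu> p"
  have P: "0 < ?P" using perp_norm_sq_pos[OF assms(4)] .
  have "sqrt (?P / 2) \<le> sqrt (?r\<^sup>2 / 2)"
    using perp_norm_sq_le_r_mu[of p \<mu>] by simp
  also have "\<dots> = ?r / sqrt 2"
    unfolding r_mu_def by (simp add: real_sqrt_divide)
  also have "\<dots> \<le> 145/100 + Vfun p"
  proof -
    have "1414/1000 \<le> sqrt (2::real)" by (rule real_le_rsqrt) (simp add: power2_eq_square)
    then have "1414/1000 * (145/100 + Vfun p) \<le> sqrt 2 * (145/100 + Vfun p)"
      using K_Vfun_nonneg[OF assms(3)] by (intro mult_right_mono) simp_all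
    with K_r_mu_le[OF assms(1-3)] show ?thesis by (simp add: pos_divide_le_eq mult.commute)
  qed
  finally have "cubic_part p / ?P \<le> 145/100 + Vfun p"
    using cubic_part_div_le[OF P] by linarith
  then have "cubic_part p / ?P - 3/2 - Vfun p \<le> - (5/100)" by linarith
  then show ?thesis
    unfolding dtheta_sprott[OF P[THEN less_imp_neq, symmetric]] by (intro divide_right_mono) simp_all
qed

theorem theorem6:
  shows "\<exists>\<epsilon>>0. \<forall>\<mu>\<in>{-1..55/100::real}. \<forall>p\<in>K \<mu> - diag.
           dtheta p (sprott \<mu> p) < - \<epsilon>"
proof (intro exI[of _ "1/50"] conjI ballI)
  fix \<mu> :: real and p :: "real^3"
  assume \<mu>: "\<mu> \<in> {-1..55/100}" and p: "p \<in> K \<mu> - diag"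
  have "\<mu> \<noteq> -1"
    using p by (auto simp: K_def diag_def span_zero)
  with \<mu> have "-1 < \<mu>" "\<mu> \<le> 55/100" by auto
  with p have "dtheta p (sprott \<mu> p) \<le> - (5/100) / sqrt 3"
    by (intro dtheta_sprott_le_on_K) auto
  also have "\<dots> < - (1/50)"
    using sqrt3_le by (simp add: field_simps)
  finally show "dtheta p (sprott \<mu> p) < - (1/50)" .
qed simp

end
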